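(* Let $\mathcal A$ be an $N\times N$ Hermitian matrix and, for $k=0,1,\dots,N-1$, let $\mathcal A^k$ be the matrix whose entries equal those of $\mathcal A$ on the $k$-th supra- and infra-diagonals (entries $(i,i+k)$ and $(i+k,i)$) and are zero elsewhere. Let $\psi\in\mathbb{C}^N$ be a normalized vector (not necessarily an eigenvector), and set $d_k=(\psi,\mathcal A^k\psi)$ and $\lambda=(\psi,\mathcal A\psi)=\sum_{k=0}^{N-1}d_k$. Let $M\le N$ be a positive integer. Then there exist an integer $n\in[0,N-M]$ and a normalized vector $\phi\in\mathbb{C}^N$ with $\phi_j=0$ unless $n+1\le j\le n+M$, such that $$(\phi,\mathcal A\phi)\le\lambda+\frac{C}{M^2}\sum_{k=1}^{M-1}k^2|d_k|+C\sum_{k=M}^{N-1}|d_k|,$$ where $C>0$ is a universal constant. *)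

theory Defs
  imports Complex_Main
begin

text \<open>N x N complex matrices are represented as functions nat => nat => complex,
  vectors in C^N as functions nat => complex; indices range over 1..N.\<close>

definition hermitian_mat :: "nat \<Rightarrow> (nat \<Rightarrow> nat \<Rightarrow> complex) \<Rightarrow> bool" where
  "hermitian_mat N A \<longleftrightarrow> (\<forall>i\<in>{1..N}. \<forall>j\<in>{1..N}. A j i = cnj (A i j))"

definition inner_mat :: "nat \<Rightarrow> (nat \<Rightarrow> complex) \<Rightarrow> (nat \<Rightarrow> nat \<Rightarrow> complex) \<Rightarrow> (nat \<Rightarrow> complex) \<Rightarrow> complex" where
  "inner_mat N x A y = (\<Sum>i=1..N. cnj (x i) * (\<Sum>j=1..N. A i j * y j))"

definition vnorm2 :: "nat \<Rightarrow> (nat \<Rightarrow> complex) \<Rightarrow> real" where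
  "vnorm2 N x = (\<Sum>i=1..N. (cmod (x i))\<^sup>2)"

definition band :: "(nat \<Rightarrow> nat \<Rightarrow> complex) \<Rightarrow> nat \<Rightarrow> (nat \<Rightarrow> nat \<Rightarrow> complex)" where
  "band A k = (\<lambda>i j. if j = i + k \<or> i = j + k then A i j else 0)"

end

theory Submission
  imports Defs
begin

text \<open>Multiply \<psi> by the translates \<open>\<chi>(\<cdot> - n)\<close> of the tent window \<open>\<chi> = tent M\<close> of
  width \<open>M\<close>. Summed over \<open>n\<close>, the energies of these localized vectors give
  \<open>\<Sum>\<^sub>k G(k) d\<^sub>k\<close> and their squared norms give \<open>G(0)\<close>, where \<open>G = tent_autocorr M\<close> is
  the autocorrelation of \<open>\<chi>\<close>; hence some translate has Rayleigh quotient at most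
  \<open>\<Sum>\<^sub>k G(k) d\<^sub>k / G(0)\<close>. As \<open>\<chi>\<close> is 1-Lipschitz, \<open>0 \<le> G(0) - G(k) \<le> M k\<^sup>2\<close>; moreover
  \<open>G(k) = 0\<close> for \<open>k \<ge> M\<close> and \<open>G(0) \<ge> M\<^sup>3/32\<close>, which bounds the excess over
  \<open>\<lambda> = \<Sum>\<^sub>k d\<^sub>k\<close> with \<open>C = 32\<close>. Only real parts enter.\<close>

definition tent :: "nat \<Rightarrow> int \<Rightarrow> real" where
  "tent M m = of_int (max 0 (min m (int M + 1 - m)))"

definition tent_autocorr :: "nat \<Rightarrow> int \<Rightarrow> real" where
  "tent_autocorr M t = (\<Sum>m\<in>{1..int M}. tent M m * tent M (m + t))"

lemma sum_int_interval_shift: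
  fixes h :: "int \<Rightarrow> 'a::comm_monoid_add"
  shows "(\<Sum>m\<in>{c..d}. h (m + t)) = sum h {c + t..d + t}"
  by (rule sum.reindex_bij_witness[of _ "\<lambda>m. m - t" "\<lambda>m. m + t"]) auto

lemma sum_int_interval_supported:
  fixes h :: "int \<Rightarrow> 'a::comm_monoid_add"
  assumes "\<And>m. m \<notin> {a..b} \<Longrightarrow> h m = 0" and "{a..b} \<subseteq> {c..d}"
  shows "sum h {c..d} = sum h {a..b}"
  by (rule sum.mono_neutral_right) (use assms in auto)

subsection \<open>The tent window and its autocorrelation\<close>

lemma tent_eq_0: "m \<notin> {1..int M} \<Longrightarrow> tent M m = 0"
  unfolding tent_def by auto

lemma tent_nonneg: "0 \<le> tent M m"
  unfolding tent_def by auto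

lemma tent_lipschitz: "\<bar>tent M a - tent M b\<bar> \<le> of_int \<bar>a - b\<bar>"
proof -
  have "\<bar>max 0 (min a (int M + 1 - a)) - max 0 (min b (int M + 1 - b))\<bar> \<le> \<bar>a - b\<bar>"
    by (simp add: min_def max_def abs_if)
  then show ?thesis
    unfolding tent_def by (metis of_int_abs of_int_diff of_int_le_iff)
qed

lemma tent_autocorr_minus: "tent_autocorr M (- t) = tent_autocorr M t"
proof -
  have "tent_autocorr M (- t) = (\<Sum>m\<in>{1 - t..int M - t}. tent M m * tent M (m + t))"
    unfolding tent_autocorr_def
    by (rule sum.reindex_bij_witness[of _ "\<lambda>m. m + t" "\<lambda>m. m - t"]) (auto simp: mult.commute)
  also have "\<dots> = (\<Sum>m\<in>{1 - \<bar>t\<bar>..int M + \<bar>t\<bar>}. tent M m * tent M (m + t))"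
    by (rule sum_int_interval_supported[symmetric]) (auto simp: tent_eq_0)
  also have "\<dots> = tent_autocorr M t"
    unfolding tent_autocorr_def by (rule sum_int_interval_supported) (auto simp: tent_eq_0)
  finally show ?thesis .
qed

lemma tent_autocorr_abs: "tent_autocorr M \<bar>t\<bar> = tent_autocorr M t"
  by (cases "0 \<le> t") (simp_all add: tent_autocorr_minus)

lemma sum_tent_translates:
  assumes "1 \<le> i" "i \<le> int N"
  shows "(\<Sum>n\<in>{- int M..int N}. tent M (i - n) * tent M (j - n)) = tent_autocorr M (j - i)"
proof -
  have "(\<Sum>n\<in>{- int M..int N}. tent M (i - n) * tent M (j - n))
      = (\<Sum>m\<in>{i - int N..i + int M}. tent M m * tent M (m + (j - i)))"
    by (rule sum.reindex_bij_witness[of _ "\<lambda>m. i - m" "\<lambda>n. i - n"]) auto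
  also have "\<dots> = tent_autocorr M (j - i)"
    unfolding tent_autocorr_def by (rule sum_int_interval_supported) (use assms in \<open>auto simp: tent_eq_0\<close>)
  finally show ?thesis .
qed

lemma tent_autocorr_eq_0: "int M \<le> t \<Longrightarrow> tent_autocorr M t = 0"
  unfolding tent_autocorr_def by (rule sum.neutral) (auto simp: tent_eq_0)

lemma tent_autocorr_defect_eq:
  assumes "0 \<le> k"
  shows "2 * (tent_autocorr M 0 - tent_autocorr M k)
    = (\<Sum>m\<in>{1 - k..int M}. (tent M (m + k) - tent M m)\<^sup>2)"
proof -
  let ?R = "{1 - k..int M}"
  have G0: "tent_autocorr M 0 = (\<Sum>m\<in>{1..int M}. (tent M m)\<^sup>2)"
    unfolding tent_autocorr_def by (simp add: power2_eq_square)
  have "(\<Sum>m\<in>?R. (tent M m)\<^sup>2) = tent_autocorr M 0"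
    unfolding G0 by (rule sum_int_interval_supported) (use assms in \<open>auto simp: tent_eq_0\<close>)
  moreover have "(\<Sum>m\<in>?R. (tent M (m + k))\<^sup>2) = tent_autocorr M 0"
    unfolding sum_int_interval_shift[of "\<lambda>m. (tent M m)\<^sup>2"] G0
    by (rule sum_int_interval_supported) (use assms in \<open>auto simp: tent_eq_0\<close>)
  moreover have "(\<Sum>m\<in>?R. tent M m * tent M (m + k)) = tent_autocorr M k"
    unfolding tent_autocorr_def
    by (rule sum_int_interval_supported) (use assms in \<open>auto simp: tent_eq_0\<close>)
  moreover have "(\<Sum>m\<in>?R. (tent M (m + k) - tent M m)\<^sup>2)
      = (\<Sum>m\<in>?R. (tent M (m + k))\<^sup>2) + (\<Sum>m\<in>?R. (tent M m)\<^sup>2)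
        - 2 * (\<Sum>m\<in>?R. tent M m * tent M (m + k))"
    by (simp add: power2_diff sum.distrib sum_subtractf sum_distrib_left algebra_simps)
  ultimately show ?thesis
    by simp
qed

lemma tent_autocorr_le_tent_autocorr_0:
  assumes "0 \<le> k"
  shows "tent_autocorr M k \<le> tent_autocorr M 0"
proof -
  have "0 \<le> (\<Sum>m\<in>{1 - k..int M}. (tent M (m + k) - tent M m)\<^sup>2)"
    by (rule sum_nonneg) simp
  then show ?thesis
    using tent_autocorr_defect_eq[OF assms, of M] by simp
qed

lemma tent_autocorr_defect_le:
  assumes "0 \<le> k" "k \<le> int M"
  shows "tent_autocorr M 0 - tent_autocorr M k \<le> real M * (of_int k)\<^sup>2"
proof -
  have "(\<Sum>m\<in>{1 - k..int M}. (tent M (m + k) - tent M m)\<^sup>2) \<le> (\<Sum>m\<in>{1 - k..int M}. (of_int k)\<^sup>2)"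
  proof (rule sum_mono)
    fix m
    have "\<bar>tent M (m + k) - tent M m\<bar> \<le> of_int k"
      using tent_lipschitz[of M "m + k" m] assms by simp
    then show "(tent M (m + k) - tent M m)\<^sup>2 \<le> (of_int k)\<^sup>2"
      by (metis abs_ge_zero power2_abs power_mono)
  qed
  also have "\<dots> = of_int (int M + k) * (of_int k)\<^sup>2"
    using assms by simp
  also have "\<dots> \<le> of_int (2 * int M) * (of_int k)\<^sup>2"
    by (rule mult_right_mono) (use assms in auto)
  finally show ?thesis
    using tent_autocorr_defect_eq[OF assms(1), of M] by simp
qed

lemma cube_le_tent_autocorr_0:
  assumes "0 < M"
  shows "(real M)^3 \<le> 32 * tent_autocorr M 0"
proof -
  \<comment> \<open>\<open>\<chi> \<ge> a\<close> on the middle half \<open>{a..b}\<close> of the support, where \<open>a \<approx> M/4\<close>\<close>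
  define a where "a = (int M + 3) div 4"
  define b where "b = int M + 1 - a"
  have a: "int M \<le> 4 * a" "4 * a \<le> int M + 3" "1 \<le> a"
    using assms unfolding a_def by auto
  have "(\<Sum>m\<in>{a..b}. (of_int a)\<^sup>2) \<le> (\<Sum>m\<in>{a..b}. (tent M m)\<^sup>2)"
  proof (rule sum_mono)
    fix m assume "m \<in> {a..b}"
    then have "of_int a \<le> tent M m"
      unfolding tent_def b_def by auto
    then show "(of_int a)\<^sup>2 \<le> (tent M m)\<^sup>2"
      using a by (intro power_mono) auto
  qed
  also have "\<dots> \<le> (\<Sum>m\<in>{1..int M}. (tent M m)\<^sup>2)"
    by (rule sum_mono2) (use a in \<open>auto simp: b_def\<close>)
  also have "\<dots> = tent_autocorr M 0"
    unfolding tent_autocorr_def by (simp add: power2_eq_square)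
  finally have lower: "of_int (b - a + 1) * (of_int a)\<^sup>2 \<le> tent_autocorr M 0"
    using a unfolding b_def by simp
  have half: "int M \<le> 2 * (b - a + 1)"
    using a unfolding b_def by simp
  have "(real M)^3 = real M * (real M)\<^sup>2"
    by (simp add: power2_eq_square power3_eq_cube)
  also have "\<dots> \<le> of_int (2 * (b - a + 1)) * (of_int (4 * a))\<^sup>2"
  proof (rule mult_mono)
    show "real M \<le> of_int (2 * (b - a + 1))"
      using half by linarith
    show "(real M)\<^sup>2 \<le> (of_int (4 * a))\<^sup>2"
      by (rule power_mono) (use a in linarith)+
  qed (use half in auto)
  also have "\<dots> = 32 * (of_int (b - a + 1) * (of_int a)\<^sup>2)"
    by (simp add: power2_eq_square)
  finally show ?thesis
    using lower by linarith
qed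

lemma tent_autocorr_0_pos:
  assumes "0 < M"
  shows "0 < tent_autocorr M 0"
proof -
  have "0 < (real M)^3"
    using assms by simp
  then show ?thesis
    using cube_le_tent_autocorr_0[OF assms] by linarith
qed

lemma tent_autocorr_weight_defect_le:
  assumes "0 < M"
  shows "(tent_autocorr M (int k) / tent_autocorr M 0 - 1) * Re z
    \<le> (if k < M then 32 / (real M)\<^sup>2 * ((real k)\<^sup>2 * cmod z) else 32 * cmod z)"
proof -
  define G0 where "G0 = tent_autocorr M 0"
  define q where "q = 1 - tent_autocorr M (int k) / G0"
  have G0: "0 < G0" "(real M)^3 \<le> 32 * G0"
    using tent_autocorr_0_pos cube_le_tent_autocorr_0 assms unfolding G0_def by auto
  have Gq: "G0 * q = G0 - tent_autocorr M (int k)"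
    using G0(1) unfolding q_def by (simp add: field_simps)
  have "0 \<le> G0 * q"
    using Gq tent_autocorr_le_tent_autocorr_0[of "int k" M] unfolding G0_def by simp
  then have "0 \<le> q"
    using G0(1) by (simp add: zero_le_mult_iff)
  have "- Re z \<le> cmod z"
    using abs_Re_le_cmod[of z] by linarith
  then have "q * (- Re z) \<le> q * cmod z"
    using \<open>0 \<le> q\<close> by (rule mult_left_mono)
  then have "(tent_autocorr M (int k) / G0 - 1) * Re z \<le> q * cmod z"
    unfolding q_def by (simp add: algebra_simps)
  moreover have "q * cmod z \<le> (if k < M then 32 / (real M)\<^sup>2 * ((real k)\<^sup>2 * cmod z) else 32 * cmod z)"
  proof (cases "k < M")
    case True
    have "q * (real M)^3 \<le> q * (32 * G0)"
      using G0(2) \<open>0 \<le> q\<close> by (rule mult_left_mono)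
    also have "\<dots> = 32 * (G0 * q)"
      by simp
    also have "\<dots> \<le> 32 * (real M * (real k)\<^sup>2)"
      using Gq tent_autocorr_defect_le[of "int k" M] True unfolding G0_def by simp
    finally have "real M * (q * (real M)\<^sup>2) \<le> real M * (32 * (real k)\<^sup>2)"
      by (simp add: power3_eq_cube power2_eq_square mult_ac)
    then have "q * (real M)\<^sup>2 \<le> 32 * (real k)\<^sup>2"
      using assms by simp
    then have "q \<le> 32 / (real M)\<^sup>2 * (real k)\<^sup>2"
      using assms by (simp add: pos_le_divide_eq mult.commute)
    then have "q * cmod z \<le> 32 / (real M)\<^sup>2 * (real k)\<^sup>2 * cmod z"
      by (rule mult_right_mono) simp
    then show ?thesis
      using True by (simp add: mult.assoc)
  next
    case False
    then have "q = 1"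
      using G0(1) tent_autocorr_eq_0[of M "int k"] unfolding q_def by simp
    then show ?thesis
      using False by simp
  qed
  ultimately show ?thesis
    unfolding G0_def by simp
qed

lemma tent_autocorr_average_le:
  fixes d :: "nat \<Rightarrow> complex"
  assumes "0 < M" "M \<le> N"
  shows "Re (\<Sum>k=0..N-1. of_real (tent_autocorr M (int k)) * d k) / tent_autocorr M 0
    \<le> Re (\<Sum>k=0..N-1. d k) + 32 / (real M)\<^sup>2 * (\<Sum>k=1..M-1. (real k)\<^sup>2 * cmod (d k))
       + 32 * (\<Sum>k=M..N-1. cmod (d k))"
proof -
  let ?b = "\<lambda>k. if k < M then 32 / (real M)\<^sup>2 * ((real k)\<^sup>2 * cmod (d k)) else 32 * cmod (d k)"
  have "Re (\<Sum>k=0..N-1. of_real (tent_autocorr M (int k)) * d k) / tent_autocorr M 0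
      - Re (\<Sum>k=0..N-1. d k)
      = (\<Sum>k=0..N-1. (tent_autocorr M (int k) / tent_autocorr M 0 - 1) * Re (d k))"
    using tent_autocorr_0_pos[OF assms(1)]
    by (simp add: Re_sum sum_divide_distrib sum_subtractf[symmetric] field_simps)
  also have "\<dots> \<le> sum ?b {0..N-1}"
    by (rule sum_mono) (rule tent_autocorr_weight_defect_le[OF assms(1)])
  also have "sum ?b {0..N-1} = sum ?b {0..<M} + sum ?b {M..N-1}"
    using assms by (subst sum.union_disjoint[symmetric]) (auto intro: sum.cong)
  also have "sum ?b {0..<M} = 32 / (real M)\<^sup>2 * (\<Sum>k=1..M-1. (real k)\<^sup>2 * cmod (d k))"
  proof -
    have "{0..<M} = insert 0 {1..M-1}"
      using assms by auto
    then have "sum ?b {0..<M} = sum ?b {1..M-1}"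
      using assms(1) by simp
    also have "\<dots> = (\<Sum>k=1..M-1. 32 / (real M)\<^sup>2 * ((real k)\<^sup>2 * cmod (d k)))"
      by (rule sum.cong) auto
    finally show ?thesis
      by (simp only: sum_distrib_left)
  qed
  also have "sum ?b {M..N-1} = 32 * (\<Sum>k=M..N-1. cmod (d k))"
    by (simp add: sum_distrib_left)
  finally show ?thesis
    by simp
qed

subsection \<open>Band decomposition of quadratic forms\<close>

lemma inner_mat_double_sum:
  "inner_mat N x B y = (\<Sum>i=1..N. \<Sum>j=1..N. cnj (x i) * B i j * y j)"
  unfolding inner_mat_def by (simp add: sum_distrib_left mult.assoc)

lemma sum_weighted_band_entry:
  assumes "i \<in> {1..N}" "j \<in> {1..N}"
  shows "(\<Sum>k=0..N-1. g k * band A k i j) = g (nat \<bar>int j - int i\<bar>) * A i j"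
proof -
  have "(\<Sum>k=0..N-1. g k * band A k i j)
      = (\<Sum>k=0..N-1. if k = nat \<bar>int j - int i\<bar> then g k * A i j else 0)"
    by (rule sum.cong) (auto simp: band_def)
  also have "\<dots> = g (nat \<bar>int j - int i\<bar>) * A i j"
    using assms by (subst sum.delta) auto
  finally show ?thesis .
qed

lemma sum_weighted_inner_mat_band:
  "(\<Sum>k=0..N-1. g k * inner_mat N x (band A k) y)
   = (\<Sum>i=1..N. \<Sum>j=1..N. g (nat \<bar>int j - int i\<bar>) * (cnj (x i) * A i j * y j))"
proof -
  have "(\<Sum>k=0..N-1. g k * inner_mat N x (band A k) y)
     = (\<Sum>k=0..N-1. \<Sum>i=1..N. \<Sum>j=1..N. cnj (x i) * (g k * band A k i j) * y j)"
    unfolding inner_mat_double_sum by (simp add: sum_distrib_left algebra_simps)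
  also have "\<dots> = (\<Sum>i=1..N. \<Sum>j=1..N. \<Sum>k=0..N-1. cnj (x i) * (g k * band A k i j) * y j)"
    by (subst sum.swap, rule sum.cong[OF refl], rule sum.swap)
  also have "\<dots> = (\<Sum>i=1..N. \<Sum>j=1..N. cnj (x i) * (\<Sum>k=0..N-1. g k * band A k i j) * y j)"
    by (simp add: sum_distrib_left sum_distrib_right)
  also have "\<dots> = (\<Sum>i=1..N. \<Sum>j=1..N. g (nat \<bar>int j - int i\<bar>) * (cnj (x i) * A i j * y j))"
  proof (intro sum.cong refl)
    fix i j
    assume "i \<in> {1..N}" "j \<in> {1..N}"
    from sum_weighted_band_entry[OF this, of g A]
    show "cnj (x i) * (\<Sum>k=0..N-1. g k * band A k i j) * y j
      = g (nat \<bar>int j - int i\<bar>) * (cnj (x i) * A i j * y j)"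
      by (simp add: mult_ac)
  qed
  finally show ?thesis .
qed

lemma inner_mat_eq_sum_band: "inner_mat N x A y = (\<Sum>k=0..N-1. inner_mat N x (band A k) y)"
  using sum_weighted_inner_mat_band[of "\<lambda>_. 1" N x A y] by (simp add: inner_mat_double_sum)

subsection \<open>Localization and averaging\<close>

definition localize :: "nat \<Rightarrow> (nat \<Rightarrow> complex) \<Rightarrow> int \<Rightarrow> nat \<Rightarrow> complex" where
  "localize M x n i = of_real (tent M (int i - n)) * x i"

lemma localize_eq_0: "int i - n \<notin> {1..int M} \<Longrightarrow> localize M x n i = 0"
  unfolding localize_def by (simp add: tent_eq_0)

lemma sum_localize_inner_mat:
  "(\<Sum>n\<in>{- int M..int N}. inner_mat N (localize M x n) A (localize M x n))
   = (\<Sum>k=0..N-1. of_real (tent_autocorr M (int k)) * inner_mat N x (band A k) x)"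
proof -
  have "(\<Sum>n\<in>{- int M..int N}. inner_mat N (localize M x n) A (localize M x n))
      = (\<Sum>i=1..N. \<Sum>j=1..N.
           of_real (\<Sum>n\<in>{- int M..int N}. tent M (int i - n) * tent M (int j - n))
           * (cnj (x i) * A i j * x j))"
  proof -
    have "inner_mat N (localize M x n) A (localize M x n)
      = (\<Sum>i=1..N. \<Sum>j=1..N. of_real (tent M (int i - n) * tent M (int j - n)) * (cnj (x i) * A i j * x j))"
      for n
      unfolding inner_mat_double_sum localize_def by (simp add: algebra_simps)
    then show ?thesis
      by (simp add: sum_distrib_right sum.swap[of _ "{- int M..int N}"])
  qed
  also have "\<dots> = (\<Sum>i=1..N. \<Sum>j=1..N.
      of_real (tent_autocorr M (int (nat \<bar>int j - int i\<bar>))) * (cnj (x i) * A i j * x j))"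
    by (intro sum.cong refl) (simp add: sum_tent_translates tent_autocorr_abs)
  also have "\<dots> = (\<Sum>k=0..N-1. of_real (tent_autocorr M (int k)) * inner_mat N x (band A k) x)"
    by (rule sum_weighted_inner_mat_band[symmetric])
  finally show ?thesis .
qed

lemma sum_localize_vnorm2:
  "(\<Sum>n\<in>{- int M..int N}. vnorm2 N (localize M x n)) = tent_autocorr M 0 * vnorm2 N x"
proof -
  have "(\<Sum>n\<in>{- int M..int N}. vnorm2 N (localize M x n))
      = (\<Sum>i=1..N. (\<Sum>n\<in>{- int M..int N}. tent M (int i - n) * tent M (int i - n)) * (cmod (x i))\<^sup>2)"
    unfolding vnorm2_def localize_def
    by (subst sum.swap)
      (simp add: sum_distrib_left sum_distrib_right norm_mult power_mult_distrib power2_eq_square tent_nonneg mult_ac)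
  also have "\<dots> = (\<Sum>i=1..N. tent_autocorr M 0 * (cmod (x i))\<^sup>2)"
    by (intro sum.cong refl) (subst sum_tent_translates, auto)
  finally show ?thesis
    by (simp add: vnorm2_def sum_distrib_left)
qed

lemma window_in_range:
  fixes n :: int
  assumes "M \<le> N"
  obtains n' :: nat where "n' \<le> N - M"
    and "\<And>j. j \<in> {1..N} \<Longrightarrow> int j - n \<in> {1..int M} \<Longrightarrow> n' + 1 \<le> j \<and> j \<le> n' + M"
proof (rule that)
  define n' where "n' = nat (max 0 (min n (int N - int M)))"
  show "n' \<le> N - M"
    using assms unfolding n'_def by auto
  show "n' + 1 \<le> j \<and> j \<le> n' + M" if "j \<in> {1..N}" "int j - n \<in> {1..int M}" for j
  proof -
    have "int n' = max 0 (min n (int N - int M))"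
      unfolding n'_def by simp
    then have "int n' + 1 \<le> int j \<and> int j \<le> int n' + int M"
      using that assms by (auto simp: max_def min_def)
    then show ?thesis
      by linarith
  qed
qed

lemma inner_mat_eq_0_if_vnorm2_eq_0: "vnorm2 N x = 0 \<Longrightarrow> inner_mat N x A x = 0"
  unfolding vnorm2_def inner_mat_def by (simp add: sum_nonneg_eq_0_iff)

lemma vnorm2_scale: "vnorm2 N (\<lambda>i. of_real r * x i) = r\<^sup>2 * vnorm2 N x"
  unfolding vnorm2_def by (simp add: norm_mult power_mult_distrib sum_distrib_left)

lemma inner_mat_scale:
  "inner_mat N (\<lambda>i. of_real r * x i) A (\<lambda>i. of_real r * x i) = of_real (r\<^sup>2) * inner_mat N x A x"
  unfolding inner_mat_double_sum by (simp add: sum_distrib_left power2_eq_square mult_ac)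

lemma normalize_vnorm2_inner_mat:
  assumes "0 < vnorm2 N x"
  defines "y \<equiv> \<lambda>i. of_real (1 / sqrt (vnorm2 N x)) * x i"
  shows "vnorm2 N y = 1"
    and "Re (inner_mat N y A y) = Re (inner_mat N x A x) / vnorm2 N x"
  using assms unfolding y_def vnorm2_scale inner_mat_scale by (simp_all add: power_divide)

lemma exists_ratio_le_average:
  fixes E w :: "'a \<Rightarrow> real"
  assumes "finite S" and "\<And>n. n \<in> S \<Longrightarrow> 0 \<le> w n"
    and "\<And>n. n \<in> S \<Longrightarrow> w n = 0 \<Longrightarrow> E n = 0" and "0 < sum w S"
  shows "\<exists>n\<in>S. 0 < w n \<and> E n / w n \<le> sum E S / sum w S"
proof (rule ccontr)
  define \<mu> where "\<mu> = sum E S / sum w S"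
  assume contra: "\<not> ?thesis"
  have above: "\<mu> * w n < E n" if "n \<in> S" "0 < w n" for n
  proof -
    have "\<mu> < E n / w n"
      using contra that unfolding \<mu>_def by auto
    then show ?thesis
      using that(2) by (simp add: pos_less_divide_eq)
  qed
  have "\<not> (\<forall>n\<in>S. w n \<le> 0)"
    using sum_nonpos[of S w] assms(4) by auto
  then obtain n0 where n0: "n0 \<in> S" "0 < w n0"
    by auto
  have "0 \<le> E n - \<mu> * w n" if "n \<in> S" for n
    using above[OF that] assms(2,3)[OF that] by fastforce
  then have "0 < (\<Sum>n\<in>S. E n - \<mu> * w n)"
    using above[OF n0] by (intro sum_pos2[OF assms(1) n0(1)]) auto
  also have "\<dots> = sum E S - \<mu> * sum w S"
    by (simp add: sum_subtractf sum_distrib_left)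
  also have "\<dots> = 0"
    using assms(4) by (simp add: \<mu>_def)
  finally show False
    by simp
qed

lemma exists_localize_rayleigh_quotient_le_average:
  assumes "vnorm2 N x = 1" and "0 < M"
  obtains n where "0 < vnorm2 N (localize M x n)"
    and "Re (inner_mat N (localize M x n) A (localize M x n)) / vnorm2 N (localize M x n)
      \<le> Re (\<Sum>k=0..N-1. of_real (tent_autocorr M (int k)) * inner_mat N x (band A k) x)
         / tent_autocorr M 0"
proof -
  let ?S = "{- int M..int N}"
  define E where "E n = Re (inner_mat N (localize M x n) A (localize M x n))" for n
  define w where "w n = vnorm2 N (localize M x n)" for n
  have sum_w: "sum w ?S = tent_autocorr M 0"
    using sum_localize_vnorm2[where M = M and N = N and x = x] assms(1) unfolding w_def by simp
  have sum_E: "sum E ?S = Re (\<Sum>k=0..N-1. of_real (tent_autocorr M (int k)) * inner_mat N x (band A k) x)"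
    unfolding E_def by (simp only: Re_sum[symmetric] sum_localize_inner_mat)
  have "\<exists>n\<in>?S. 0 < w n \<and> E n / w n \<le> sum E ?S / sum w ?S"
  proof (rule exists_ratio_le_average)
    show "0 \<le> w n" for n
      unfolding w_def vnorm2_def by (rule sum_nonneg) simp
    show "E n = 0" if "w n = 0" for n
      using that unfolding w_def E_def by (simp add: inner_mat_eq_0_if_vnorm2_eq_0)
    show "0 < sum w ?S"
      unfolding sum_w using assms(2) by (rule tent_autocorr_0_pos)
  qed simp
  then show ?thesis
    using that unfolding sum_E sum_w E_def w_def by blast
qed

lemma exists_localized_rayleigh_quotient_le:
  assumes \<psi>: "vnorm2 N \<psi> = 1" and M: "0 < M" "M \<le> N"
  shows "\<exists>n \<phi>. n \<le> N - M \<and> vnorm2 N \<phi> = 1 \<and>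
    (\<forall>j\<in>{1..N}. \<not> (n + 1 \<le> j \<and> j \<le> n + M) \<longrightarrow> \<phi> j = 0) \<and>
    Re (inner_mat N \<phi> A \<phi>) \<le> Re (inner_mat N \<psi> A \<psi>)
      + 32 / (real M)\<^sup>2 * (\<Sum>k=1..M-1. (real k)\<^sup>2 * cmod (inner_mat N \<psi> (band A k) \<psi>))
      + 32 * (\<Sum>k=M..N-1. cmod (inner_mat N \<psi> (band A k) \<psi>))"
proof -
  define d where "d k = inner_mat N \<psi> (band A k) \<psi>" for k
  obtain n where wn: "0 < vnorm2 N (localize M \<psi> n)"
    and En: "Re (inner_mat N (localize M \<psi> n) A (localize M \<psi> n)) / vnorm2 N (localize M \<psi> n)
      \<le> Re (\<Sum>k=0..N-1. of_real (tent_autocorr M (int k)) * d k) / tent_autocorr M 0"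
    using exists_localize_rayleigh_quotient_le_average[OF \<psi> M(1), of A] unfolding d_def by blast
  obtain n' where n': "n' \<le> N - M"
    and window: "\<And>j. j \<in> {1..N} \<Longrightarrow> int j - n \<in> {1..int M} \<Longrightarrow> n' + 1 \<le> j \<and> j \<le> n' + M"
    using window_in_range[OF M(2)] by blast
  define \<phi> where "\<phi> i = of_real (1 / sqrt (vnorm2 N (localize M \<psi> n))) * localize M \<psi> n i" for i
  have norm: "vnorm2 N \<phi> = 1" and energy: "Re (inner_mat N \<phi> A \<phi>)
      = Re (inner_mat N (localize M \<psi> n) A (localize M \<psi> n)) / vnorm2 N (localize M \<psi> n)"
    using normalize_vnorm2_inner_mat[OF wn] unfolding \<phi>_def by auto
  have "inner_mat N \<psi> A \<psi> = (\<Sum>k=0..N-1. d k)"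
    unfolding d_def by (rule inner_mat_eq_sum_band)
  then have bound: "Re (inner_mat N \<phi> A \<phi>) \<le> Re (inner_mat N \<psi> A \<psi>)
      + 32 / (real M)\<^sup>2 * (\<Sum>k=1..M-1. (real k)\<^sup>2 * cmod (d k)) + 32 * (\<Sum>k=M..N-1. cmod (d k))"
    using En tent_autocorr_average_le[OF M, of d] unfolding energy by simp
  show ?thesis
  proof (intro exI conjI ballI impI)
    show "n' \<le> N - M"
      by (fact n')
    show "vnorm2 N \<phi> = 1"
      by (fact norm)
    show "\<phi> j = 0" if "j \<in> {1..N}" "\<not> (n' + 1 \<le> j \<and> j \<le> n' + M)" for j
    proof -
      have "int j - n \<notin> {1..int M}"
        using window[OF that(1)] that(2) by blast
      then show ?thesis
        unfolding \<phi>_def by (simp add: localize_eq_0)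
    qed
  qed (use bound in \<open>simp add: d_def\<close>)
qed

theorem theoremA1:
  shows "\<exists>C::real. C > 0 \<and>
    (\<forall>(N::nat) (A::nat \<Rightarrow> nat \<Rightarrow> complex) (\<psi>::nat \<Rightarrow> complex) (M::nat).
      hermitian_mat N A \<and> vnorm2 N \<psi> = 1 \<and> 0 < M \<and> M \<le> N \<longrightarrow>
      (\<exists>(n::nat) (\<phi>::nat \<Rightarrow> complex).
         n \<le> N - M \<and> vnorm2 N \<phi> = 1 \<and>
         (\<forall>j\<in>{1..N}. \<not> (n + 1 \<le> j \<and> j \<le> n + M) \<longrightarrow> \<phi> j = 0) \<and>
         Re (inner_mat N \<phi> A \<phi>) \<le>
           Re (inner_mat N \<psi> A \<psi>)
           + C / (real M)\<^sup>2 * (\<Sum>k=1..M-1. (real k)\<^sup>2 * cmod (inner_mat N \<psi> (band A k) \<psi>))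
           + C * (\<Sum>k=M..N-1. cmod (inner_mat N \<psi> (band A k) \<psi>))))"
  by (intro exI[of _ "32::real"] conjI allI impI)
    (simp, blast intro: exists_localized_rayleigh_quotient_le)

end
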